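(* Let $n,k$ be integers with $2<2k\le n$ such that $\mathrm{Pet}(n,k)$ is not bipartite (equivalently, it is not the case that $n$ is even and $k$ is odd). Write $d=\gcd(n,k)$ and define the index set $$\mathrm{Ind}(n,k)=\begin{cases}\{t \mid t \text{ odd},\ 0\le t\le \min\{\tfrac{2k}{d},\ \lfloor\tfrac{(k-1)^2}{n}\rfloor+1\}\} & \text{if } k \text{ and } n \text{ are odd},\\ \{t\in\mathbb{Z} \mid 0<t\le \min\{\tfrac{2k}{d},\ \lfloor\tfrac{(k-1)^2}{n}\rfloor\}\} & \text{if } \tfrac{n}{d} \text{ is odd and } k \text{ is even},\\ \{t\in\mathbb{Z} \mid 0<t\le \min\{\tfrac{k}{d},\ \lfloor\tfrac{(k-1)^2}{n}\rfloor\}\} & \text{if } \tfrac{n}{d} \text{ and } k \text{ are even},\end{cases}$$ and $$\mathcal{G}=\bigcup_{t\in \mathrm{Ind}(n,k)}\Big\{\,tn+(1-k)\lfloor \tfrac{tn}{k}\rfloor+2,\ \ (1+k)\lceil \tfrac{tn}{k}\rceil-tn+2\,\Big\}.$$ Then, with $\mathbb{O}$ the set of odd integers, $$g_{odd}(\mathrm{Pet}(n,k))=\min\Big(\big(\{\tfrac{n}{d},\ k+3\}\cup\mathcal{G}\big)\cap\mathbb{O}\Big).$$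
   Context: For integers $n,k$ with $2<2k\le n$, the generalized Petersen graph $\mathrm{Pet}(n,k)$ has vertex set $\{u_0,\dots,u_{n-1}\}\cup\{v_0,\dots,v_{n-1}\}$ and edge set $\{u_iu_{i+1}\}\cup\{u_iv_i\}\cup\{v_iv_{i+k}\}$, $i\in\{0,\dots,n-1\}$, with indices taken modulo $n$. For a non-bipartite graph $G$, the odd girth $g_{odd}(G)$ is the length of a shortest odd cycle of $G$. *)

theory Defs
  imports Complex_Main
begin

text \<open>Generalized Petersen graph Pet(n,k). Vertex (False, i) is u_i, vertex (True, i) is v_i,
  for 0 \<le> i < n.\<close>

definition pet_vertices :: "nat \<Rightarrow> (bool \<times> nat) set" where
  "pet_vertices n = UNIV \<times> {0..<n}"

definition pet_edge :: "nat \<Rightarrow> nat \<Rightarrow> (bool \<times> nat) \<Rightarrow> (bool \<times> nat) \<Rightarrow> bool" where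
  "pet_edge n k x y \<longleftrightarrow> x \<in> pet_vertices n \<and> y \<in> pet_vertices n \<and>
     (\<exists>i<n.
        ({x, y} = {(False, i), (False, (i + 1) mod n)}) \<or>
        ({x, y} = {(False, i), (True, i)}) \<or>
        ({x, y} = {(True, i), (True, (i + k) mod n)}))"

definition pet_cycle :: "nat \<Rightarrow> nat \<Rightarrow> (bool \<times> nat) list \<Rightarrow> bool" where
  "pet_cycle n k vs \<longleftrightarrow> length vs \<ge> 3 \<and> distinct vs \<and> set vs \<subseteq> pet_vertices n \<and>
     (\<forall>j < length vs - 1. pet_edge n k (vs ! j) (vs ! (j + 1))) \<and>
     pet_edge n k (last vs) (hd vs)"

definition pet_odd_girth :: "nat \<Rightarrow> nat \<Rightarrow> nat" where
  "pet_odd_girth n k = (LEAST l. odd l \<and> (\<exists>vs. pet_cycle n k vs \<and> length vs = l))"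

definition Ind :: "nat \<Rightarrow> nat \<Rightarrow> int set" where
  "Ind n k = (let d = gcd n k; b = ((int k - 1)^2) div int n in
     if odd k \<and> odd n then
       {t. odd t \<and> 0 \<le> t \<and> t \<le> min (int (2*k div d)) (b + 1)}
     else if odd (n div d) \<and> even k then
       {t. 0 < t \<and> t \<le> min (int (2*k div d)) b}
     else if even (n div d) \<and> even k then
       {t. 0 < t \<and> t \<le> min (int (k div d)) b}
     else {})"

definition G_set :: "nat \<Rightarrow> nat \<Rightarrow> int set" where
  "G_set n k = (\<Union>t\<in>Ind n k.
     {t * int n + (1 - int k) * \<lfloor>real_of_int (t * int n) / real k\<rfloor> + 2,
      (1 + int k) * \<lceil>real_of_int (t * int n) / real k\<rceil> - t * int n + 2})"

end

theory Submission
  imports Defs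
begin

text \<open>
  Record an odd closed walk in \<open>Pet(n,k)\<close> by its net displacement \<open>(A, B)\<close>: \<open>A\<close> signed steps
  along the outer rim and \<open>B\<close> signed steps of length \<open>k\<close> along the inner rim. Then \<open>n\<close> divides
  \<open>A + k B\<close>, and \<open>A + B\<close> is odd because a closed walk uses an even number of spokes. Conversely every such
  \<open>(A, B)\<close> is realised by a closed walk of length \<open>|A|\<close>, \<open>|B|\<close> or \<open>|A| + |B| + 2\<close>, and an odd
  closed walk contains an odd cycle, so the odd girth is the least such cost.

  Writing \<open>A + k B = t n\<close>, the best multiplier for fixed \<open>t\<close> is \<open>\<lfloor>t n / k\<rfloor>\<close> or
  \<open>\<lceil>t n / k\<rceil>\<close>, and the corresponding costs are the elements of \<open>G_set n k\<close>; the pure rim walks give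
  \<open>n / d\<close>, and a parity obstruction for even \<open>k\<close> gives \<open>k + 3\<close>. It remains to see that \<open>t\<close> may
  be restricted to \<open>Ind(n,k)\<close>: adding a period of the lattice to \<open>t\<close> only increases the cost,
  and once \<open>t n > (k - 1)\<^sup>2\<close> the cost is at least \<open>k + 3\<close> (\<open>k\<close> even) or at least a cost
  coming from \<open>t = 1\<close> (\<open>k\<close> odd).
\<close>

section \<open>Closed walks and cycles\<close>

definition closed_walk :: "('a \<Rightarrow> 'a \<Rightarrow> bool) \<Rightarrow> (nat \<Rightarrow> 'a) \<Rightarrow> nat \<Rightarrow> bool" where
  "closed_walk E w l \<longleftrightarrow> 0 < l \<and> w l = w 0 \<and> (\<forall>j<l. E (w j) (w (Suc j)))"

definition is_cycle :: "('a \<Rightarrow> 'a \<Rightarrow> bool) \<Rightarrow> 'a list \<Rightarrow> bool" where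
  "is_cycle E vs \<longleftrightarrow> 3 \<le> length vs \<and> distinct vs \<and>
     (\<forall>j < length vs - 1. E (vs ! j) (vs ! (j + 1))) \<and> E (last vs) (hd vs)"

lemma closed_walk_of_cycle:
  assumes "is_cycle E vs"
  shows "closed_walk E (\<lambda>j. vs ! (j mod length vs)) (length vs)"
proof -
  have len: "3 \<le> length vs" using assms by (simp add: is_cycle_def)
  then have ne: "vs \<noteq> []" by auto
  have "E (vs ! j) (vs ! (Suc j mod length vs))" if "j < length vs" for j
  proof (cases "Suc j < length vs")
    case True
    then show ?thesis using assms by (simp add: is_cycle_def)
  next
    case False
    then have "j = length vs - 1" "Suc j = length vs" using that by auto
    then show ?thesis using assms ne by (simp add: is_cycle_def last_conv_nth hd_conv_nth)
  qed
  then show ?thesis using len ne by (simp add: closed_walk_def)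
qed

lemma injective_closed_walk_is_cycle:
  assumes w: "closed_walk E w l" and inj: "inj_on w {..<l}" and l: "3 \<le> l"
  shows "is_cycle E (map w [0..<l])"
proof -
  have "l - 1 < l" using l by simp
  then have "E (w (l - 1)) (w (Suc (l - 1)))" using w unfolding closed_walk_def by blast
  moreover have "Suc (l - 1) = l" using l by simp
  ultimately have "E (w (l - 1)) (w 0)" using w by (simp add: closed_walk_def)
  then show ?thesis
    using w l inj by (auto simp: is_cycle_def closed_walk_def distinct_map atLeast_upt last_map hd_map)
qed

lemma closed_walk_split:
  assumes w: "closed_walk E w l" and ij: "i < j" "j < l" "w i = w j"
  shows "closed_walk E (\<lambda>m. w (i + m)) (j - i)"
    and "closed_walk E (\<lambda>m. if m < i then w m else w (m + (j - i))) (l - (j - i))"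
proof -
  show "closed_walk E (\<lambda>m. w (i + m)) (j - i)"
    using w ij by (auto simp: closed_walk_def)
  have "E (if m < i then w m else w (m + (j - i))) (if Suc m < i then w (Suc m) else w (Suc m + (j - i)))"
    if m: "m < l - (j - i)" for m
  proof -
    have step: "E (w p) (w (Suc p))" if "p < l" for p
      using w that by (simp add: closed_walk_def)
    consider "Suc m < i" | "Suc m = i" | "i \<le> m" by linarith
    then show ?thesis
    proof cases
      case 2
      then show ?thesis using step[of m] ij by simp
    qed (use step ij m in auto)
  qed
  then show "closed_walk E (\<lambda>m. if m < i then w m else w (m + (j - i))) (l - (j - i))"
    using w ij by (auto simp: closed_walk_def)
qed

lemma odd_closed_walk_odd_cycle:
  assumes "closed_walk E w l" "odd l" "\<And>x. \<not> E x x"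
  shows "\<exists>vs. is_cycle E vs \<and> odd (length vs) \<and> length vs \<le> l"
  using assms(1,2)
proof (induction l arbitrary: w rule: less_induct)
  case (less l)
  show ?case
  proof (cases "inj_on w {..<l}")
    case True
    have "l \<noteq> 1" using less.prems(1) assms(3) by (auto simp: closed_walk_def)
    then have "3 \<le> l" using less.prems by (auto simp: closed_walk_def elim: oddE)
    then show ?thesis
      using injective_closed_walk_is_cycle[OF less.prems(1) True] less.prems(2) by fastforce
  next
    case False
    then obtain i j where ij: "i < j" "j < l" "w i = w j"
      unfolding inj_on_def by (metis lessThan_iff nat_neq_iff)
    note split = closed_walk_split[OF less.prems(1) ij]
    show ?thesis
    proof (cases "odd (j - i)")
      case True
      then show ?thesis using less.IH[OF _ split(1)] ij by fastforce
    next
      case False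
      then have "odd (l - (j - i))" using less.prems(2) ij by auto
      then show ?thesis using less.IH[OF _ split(2)] ij by fastforce
    qed
  qed
qed

section \<open>Closed walks in the generalized Petersen graph\<close>

lemma pet_edge_sym: "pet_edge n k x y \<Longrightarrow> pet_edge n k y x"
  unfolding pet_edge_def by (auto simp: insert_commute)

lemma pet_edge_irrefl:
  assumes "0 < k" "k < n"
  shows "\<not> pet_edge n k x x"
proof
  assume "pet_edge n k x x"
  then obtain i where i: "i < n" and
    c: "{x} = {(False, i), (False, (i + 1) mod n)} \<or> {x} = {(False, i), (True, i)} \<or>
        {x} = {(True, i), (True, (i + k) mod n)}"
    unfolding pet_edge_def by auto
  have "(i + 1) mod n \<noteq> i" "(i + k) mod n \<noteq> i"
    using assms i by (auto simp: mod_if)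
  then show False using c by (auto simp: doubleton_eq_iff)
qed

lemma pet_cycle_iff: "pet_cycle n k vs \<longleftrightarrow> is_cycle (pet_edge n k) vs"
proof
  assume cyc: "is_cycle (pet_edge n k) vs"
  have "vs ! j \<in> pet_vertices n" if "j < length vs" for j
  proof (cases "j < length vs - 1")
    case True
    then show ?thesis using cyc by (auto simp: is_cycle_def pet_edge_def)
  next
    case False
    then have "j = length vs - 1" "vs \<noteq> []" using that by auto
    then have "vs ! j = last vs" by (simp add: last_conv_nth)
    then show ?thesis using cyc by (auto simp: is_cycle_def pet_edge_def)
  qed
  then have "set vs \<subseteq> pet_vertices n" by (metis in_set_conv_nth subsetI)
  then show "pet_cycle n k vs" using cyc by (simp add: pet_cycle_def is_cycle_def)
qed (simp add: pet_cycle_def is_cycle_def)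

lemma pet_odd_girth_eqI:
  assumes "pet_cycle n k vs" "odd (length vs)" "length vs \<le> l"
    and "\<And>ws. pet_cycle n k ws \<Longrightarrow> odd (length ws) \<Longrightarrow> l \<le> length ws"
  shows "pet_odd_girth n k = l"
proof -
  have "length vs = l" using assms by (simp add: le_antisym)
  then show ?thesis
    unfolding pet_odd_girth_def using assms by (intro Least_equality) auto
qed

definition outer :: "nat \<Rightarrow> int \<Rightarrow> bool \<times> nat" where
  "outer n x = (False, nat (x mod int n))"

definition inner :: "nat \<Rightarrow> int \<Rightarrow> bool \<times> nat" where
  "inner n x = (True, nat (x mod int n))"

lemma nat_mod_add:
  assumes "0 < n"
  shows "(nat (x mod int n) + c) mod n = nat ((x + int c) mod int n)"
proof -
  have "int ((nat (x mod int n) + c) mod n) = (x mod int n + int c) mod int n"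
    using assms by (simp add: zmod_int)
  also have "\<dots> = (x + int c) mod int n" by (simp add: mod_add_left_eq)
  finally show ?thesis by simp
qed

lemma pet_edge_outer_succ:
  assumes "0 < n" shows "pet_edge n k (outer n x) (outer n (x + 1))"
  using assms nat_mod_add[OF assms, of x 1]
  unfolding pet_edge_def pet_vertices_def outer_def
  by (intro conjI exI[of _ "nat (x mod int n)"]) (auto simp: nat_less_iff)

lemma pet_edge_inner_succ:
  assumes "0 < n" shows "pet_edge n k (inner n x) (inner n (x + int k))"
  using assms nat_mod_add[OF assms, of x k]
  unfolding pet_edge_def pet_vertices_def inner_def
  by (intro conjI exI[of _ "nat (x mod int n)"]) (auto simp: nat_less_iff)

lemma pet_edge_spoke:
  assumes "0 < n" shows "pet_edge n k (outer n x) (inner n x)"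
  using assms unfolding pet_edge_def pet_vertices_def outer_def inner_def
  by (intro conjI exI[of _ "nat (x mod int n)"]) (auto simp: nat_less_iff)

lemma pet_edge_outer:
  assumes "0 < n" "\<bar>s\<bar> = 1" shows "pet_edge n k (outer n x) (outer n (x + s))"
proof (cases "s = 1")
  case False
  then have "s = -1" using assms(2) by auto
  then show ?thesis using pet_edge_sym[OF pet_edge_outer_succ[OF assms(1), where x = "x - 1"]] by simp
qed (use pet_edge_outer_succ[OF assms(1)] in simp)

lemma pet_edge_inner:
  assumes "0 < n" "\<bar>s\<bar> = 1" shows "pet_edge n k (inner n x) (inner n (x + s * int k))"
proof (cases "s = 1")
  case False
  then have "s = -1" using assms(2) by auto
  then show ?thesis using pet_edge_sym[OF pet_edge_inner_succ[OF assms(1), where x = "x - int k" and k = k]] by simp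
qed (use pet_edge_inner_succ[OF assms(1)] in simp)

definition odd_lattice_point :: "nat \<Rightarrow> nat \<Rightarrow> int \<Rightarrow> int \<Rightarrow> bool" where
  "odd_lattice_point n k A B \<longleftrightarrow> int n dvd A + int k * B \<and> odd (A + B)"

definition cycle_cost :: "int \<Rightarrow> int \<Rightarrow> int" where
  "cycle_cost A B = (if B = 0 then \<bar>A\<bar> else if A = 0 then \<bar>B\<bar> else \<bar>A\<bar> + \<bar>B\<bar> + 2)"

lemma progression_closed_walk:
  assumes edge: "\<And>x. E (g x) (g (x + \<delta>))"
    and periodic: "\<And>x y. x mod int n = y mod int n \<Longrightarrow> g x = g y"
    and "0 < L" and "int n dvd int L * \<delta>"
  shows "closed_walk E (\<lambda>j. g (\<delta> * int j)) L"
proof -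
  have "(\<delta> * int L) mod int n = (\<delta> * int 0) mod int n"
    using assms(4) by (simp add: mult.commute)
  then have "g (\<delta> * int L) = g (\<delta> * int 0)" by (rule periodic)
  moreover have "E (g (\<delta> * int j)) (g (\<delta> * int (Suc j)))" for j
    using edge[of "\<delta> * int j"] by (simp add: algebra_simps)
  ultimately show ?thesis
    using assms(3) by (simp add: closed_walk_def)
qed

lemma outer_rim_closed_walk:
  assumes "0 < n" "A \<noteq> 0" "int n dvd A"
  shows "closed_walk (pet_edge n k) (\<lambda>j. outer n (sgn A * int j)) (nat \<bar>A\<bar>)"
proof (rule progression_closed_walk)
  show "pet_edge n k (outer n x) (outer n (x + sgn A))" for x
    using pet_edge_outer assms by (simp add: abs_sgn_eq)
  show "int n dvd int (nat \<bar>A\<bar>) * sgn A"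
    using assms(3) by (simp add: abs_mult_sgn)
qed (use assms in \<open>auto simp: outer_def\<close>)

lemma inner_rim_closed_walk:
  assumes "0 < n" "B \<noteq> 0" "int n dvd int k * B"
  shows "closed_walk (pet_edge n k) (\<lambda>j. inner n (sgn B * int k * int j)) (nat \<bar>B\<bar>)"
proof (rule progression_closed_walk)
  show "pet_edge n k (inner n x) (inner n (x + sgn B * int k))" for x
    using pet_edge_inner assms by (simp add: abs_sgn_eq)
  have "int (nat \<bar>B\<bar>) * (sgn B * int k) = (\<bar>B\<bar> * sgn B) * int k"
    by (simp add: mult.assoc)
  also have "\<dots> = int k * B" by (simp add: abs_mult_sgn mult.commute)
  finally show "int n dvd int (nat \<bar>B\<bar>) * (sgn B * int k)"
    using assms(3) by (simp only:)
qed (use assms in \<open>auto simp: inner_def\<close>)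

text \<open>Go around the outer rim by \<open>A\<close>, across a spoke, around the inner rim by \<open>B\<close> steps of
  length \<open>k\<close>, and back along the spoke at \<open>A + k B \<equiv> 0\<close>.\<close>

lemma two_rim_closed_walk:
  assumes n: "0 < n" and AB: "A \<noteq> 0" "B \<noteq> 0" and dv: "int n dvd A + int k * B"
  shows "\<exists>w. closed_walk (pet_edge n k) w (nat \<bar>A\<bar> + nat \<bar>B\<bar> + 2)"
proof -
  define a where "a = nat \<bar>A\<bar>"
  define b where "b = nat \<bar>B\<bar>"
  define w where "w = (\<lambda>j. if j \<le> a then outer n (sgn A * int j)
     else if j \<le> a + b + 1 then inner n (A + sgn B * int k * (int j - int a - 1)) else outer n 0)"
  have sa: "sgn A * int a = A" and sb: "sgn B * int b = B"
    by (simp_all add: a_def b_def abs_mult_sgn mult.commute)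
  have "pet_edge n k (w j) (w (Suc j))" if j: "j < a + b + 2" for j
  proof -
    consider "j < a" | "j = a" | "a < j" "j \<le> a + b" | "j = a + b + 1" using j by linarith
    then show ?thesis
    proof cases
      case 1
      have "sgn A * int (Suc j) = sgn A * int j + sgn A" by (simp add: algebra_simps)
      then show ?thesis using 1 pet_edge_outer[OF n, of "sgn A"] AB by (simp add: w_def abs_sgn_eq)
    next
      case 2
      then show ?thesis using pet_edge_spoke[OF n, of k A] sa by (simp add: w_def)
    next
      case 3
      define x where "x = A + sgn B * int k * (int j - int a - 1)"
      have "w j = inner n x" "w (Suc j) = inner n (x + sgn B * int k)"
        using 3 by (simp_all add: w_def x_def algebra_simps)
      then show ?thesis using pet_edge_inner[OF n, of "sgn B"] AB by (simp add: abs_sgn_eq)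
    next
      case 4
      have "w j = inner n (A + sgn B * int k * (int j - int a - 1))"
        using 4 by (simp add: w_def)
      also have "A + sgn B * int k * (int j - int a - 1) = A + int k * B"
        using 4 sb by (simp add: algebra_simps)
      also have "inner n (A + int k * B) = inner n 0"
        using dv by (simp add: inner_def)
      finally have "w j = inner n 0" .
      moreover have "w (Suc j) = outer n 0" using 4 by (simp add: w_def)
      ultimately show ?thesis using pet_edge_sym[OF pet_edge_spoke[OF n, of k 0]] by simp
    qed
  qed
  moreover have "w (a + b + 2) = w 0" by (simp add: w_def)
  ultimately have "closed_walk (pet_edge n k) w (a + b + 2)"
    by (simp add: closed_walk_def)
  then show ?thesis unfolding a_def b_def by blast
qed

lemma lattice_point_closed_walk:
  assumes "0 < n" "odd_lattice_point n k A B"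
  shows "\<exists>w. closed_walk (pet_edge n k) w (nat (cycle_cost A B))"
proof -
  have dv: "int n dvd A + int k * B" and od: "odd (A + B)"
    using assms(2) by (auto simp: odd_lattice_point_def)
  consider "B = 0" | "A = 0" | "A \<noteq> 0" "B \<noteq> 0" by blast
  then show ?thesis
  proof cases
    case 1
    then have "A \<noteq> 0" "int n dvd A" "cycle_cost A B = \<bar>A\<bar>"
      using dv od by (auto simp: cycle_cost_def)
    then show ?thesis using outer_rim_closed_walk[OF assms(1), of A k] by auto
  next
    case 2
    then have "B \<noteq> 0" "int n dvd int k * B" "cycle_cost A B = \<bar>B\<bar>"
      using dv od by (auto simp: cycle_cost_def)
    then show ?thesis using inner_rim_closed_walk[OF assms(1), of B k] by auto
  next
    case 3
    then show ?thesis using two_rim_closed_walk[OF assms(1) 3 dv]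
      by (simp add: cycle_cost_def nat_add_distrib)
  qed
qed

lemma lattice_point_odd_cycle:
  assumes "0 < k" "k < n" "odd_lattice_point n k A B"
  shows "\<exists>vs. is_cycle (pet_edge n k) vs \<and> odd (length vs) \<and> int (length vs) \<le> cycle_cost A B"
proof -
  obtain w where w: "closed_walk (pet_edge n k) w (nat (cycle_cost A B))"
    using lattice_point_closed_walk[of n k A B] assms by auto
  have "odd (cycle_cost A B)" "0 < cycle_cost A B"
    using assms(3) by (auto simp: odd_lattice_point_def cycle_cost_def abs_if)
  then have "odd (nat (cycle_cost A B))" by (simp add: even_nat_iff)
  from odd_closed_walk_odd_cycle[OF w this pet_edge_irrefl[OF assms(1,2)]]
  obtain vs where "is_cycle (pet_edge n k) vs" "odd (length vs)" "length vs \<le> nat (cycle_cost A B)"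
    by blast
  moreover have "int (length vs) \<le> cycle_cost A B"
    using calculation(3) \<open>0 < cycle_cost A B\<close> by linarith
  ultimately show ?thesis by blast
qed

definition outer_step :: "nat \<Rightarrow> bool \<times> nat \<Rightarrow> bool \<times> nat \<Rightarrow> int" where
  "outer_step n x y =
     (if \<not> fst x \<and> \<not> fst y then if snd y = (snd x + 1) mod n then 1 else -1 else 0)"

definition inner_step :: "nat \<Rightarrow> nat \<Rightarrow> bool \<times> nat \<Rightarrow> bool \<times> nat \<Rightarrow> int" where
  "inner_step n k x y =
     (if fst x \<and> fst y then if snd y = (snd x + k) mod n then 1 else -1 else 0)"

definition spoke_step :: "bool \<times> nat \<Rightarrow> bool \<times> nat \<Rightarrow> int" where
  "spoke_step x y = (if fst x \<noteq> fst y then 1 else 0)"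

lemma pet_edge_step:
  assumes "pet_edge n k x y"
  shows "int (snd y) mod int n = (int (snd x) + outer_step n x y + int k * inner_step n k x y) mod int n"
    and "\<bar>outer_step n x y\<bar> + \<bar>inner_step n k x y\<bar> + spoke_step x y = 1"
proof -
  obtain i where i: "i < n" and
    c: "{x, y} = {(False, i), (False, (i + 1) mod n)} \<or> {x, y} = {(False, i), (True, i)} \<or>
        {x, y} = {(True, i), (True, (i + k) mod n)}"
    using assms unfolding pet_edge_def by auto
  have mod_fwd: "int ((i + c) mod n) mod int n = (int i + int c) mod int n" for i c
    by (simp add: zmod_int)
  have mod_back: "int i mod int n = (int ((i + c) mod n) - int c) mod int n" for c
    by (simp add: zmod_int mod_diff_left_eq)
  consider "x = (False, i)" "y = (False, (i + 1) mod n)"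
    | "y = (False, i)" "x = (False, (i + 1) mod n)"
    | "x = (False, i)" "y = (True, i)" | "y = (False, i)" "x = (True, i)"
    | "x = (True, i)" "y = (True, (i + k) mod n)"
    | "y = (True, i)" "x = (True, (i + k) mod n)"
    using c by (auto simp: doubleton_eq_iff)
  then have "int (snd y) mod int n = (int (snd x) + outer_step n x y + int k * inner_step n k x y) mod int n
    \<and> \<bar>outer_step n x y\<bar> + \<bar>inner_step n k x y\<bar> + spoke_step x y = 1"
  proof cases
    case 2
    then show ?thesis
      using mod_back[of 1] mod_fwd[of "snd x" 1]
      by (cases "snd y = (snd x + 1) mod n") (auto simp: outer_step_def inner_step_def spoke_step_def)
  next
    case 6
    then show ?thesis
      using mod_back[of k] mod_fwd[of "snd x" k]
      by (cases "snd y = (snd x + k) mod n") (auto simp: outer_step_def inner_step_def spoke_step_def)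
  qed (use mod_fwd[of i 1] mod_fwd[of i k] in \<open>auto simp: outer_step_def inner_step_def spoke_step_def\<close>)
  then show "int (snd y) mod int n = (int (snd x) + outer_step n x y + int k * inner_step n k x y) mod int n"
    and "\<bar>outer_step n x y\<bar> + \<bar>inner_step n k x y\<bar> + spoke_step x y = 1" by auto
qed

lemma closed_walk_displacement:
  assumes w: "closed_walk (pet_edge n k) w l"
  shows "int n dvd (\<Sum>j<l. outer_step n (w j) (w (Suc j)))
                  + int k * (\<Sum>j<l. inner_step n k (w j) (w (Suc j)))"
proof -
  define a where "a j = outer_step n (w j) (w (Suc j))" for j
  define b where "b j = inner_step n k (w j) (w (Suc j))" for j
  have "int (snd (w m)) mod int n = (int (snd (w 0)) + ((\<Sum>j<m. a j) + int k * (\<Sum>j<m. b j))) mod int n"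
    if "m \<le> l" for m
    using that
  proof (induction m)
    case (Suc m)
    have "int (snd (w (Suc m))) mod int n = (int (snd (w m)) + (a m + int k * b m)) mod int n"
      using pet_edge_step(1)[of n k "w m" "w (Suc m)"] w Suc.prems
      by (simp add: closed_walk_def a_def b_def add.assoc)
    also have "\<dots> = (int (snd (w m)) mod int n + (a m + int k * b m)) mod int n"
      by (simp add: mod_add_left_eq)
    also have "\<dots> = ((int (snd (w 0)) + ((\<Sum>j<m. a j) + int k * (\<Sum>j<m. b j))) mod int n
        + (a m + int k * b m)) mod int n"
      using Suc by simp
    also have "\<dots> = (int (snd (w 0)) + ((\<Sum>j<m. a j) + int k * (\<Sum>j<m. b j))
        + (a m + int k * b m)) mod int n"
      by (rule mod_add_left_eq)
    also have "\<dots> = (int (snd (w 0)) + ((\<Sum>j<Suc m. a j) + int k * (\<Sum>j<Suc m. b j))) mod int n"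
      by (simp add: algebra_simps)
    finally show ?case .
  qed simp
  from this[of l] w have "int (snd (w 0)) mod int n =
      (int (snd (w 0)) + ((\<Sum>j<l. a j) + int k * (\<Sum>j<l. b j))) mod int n"
    by (simp add: closed_walk_def)
  then show ?thesis unfolding a_def b_def
    by (metis add_diff_cancel_left' mod_eq_dvd_iff)
qed

lemma even_spoke_steps:
  assumes "w l = w 0"
  shows "even (\<Sum>j<l. spoke_step (w j) (w (Suc j)))"
proof -
  have "fst (w m) = (fst (w 0) = even (\<Sum>j<m. spoke_step (w j) (w (Suc j))))" for m
    by (induction m) (auto simp: spoke_step_def)
  from this[of l] assms show ?thesis by (cases "fst (w 0)") auto
qed

lemma no_spoke_steps_one_rim:
  assumes "(\<Sum>j<l. spoke_step (w j) (w (Suc j))) = 0"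
  shows "(\<Sum>j<l. outer_step n (w j) (w (Suc j))) = 0 \<or> (\<Sum>j<l. inner_step n k (w j) (w (Suc j))) = 0"
proof -
  have "0 \<le> spoke_step x y" for x y by (simp add: spoke_step_def)
  then have "spoke_step (w j) (w (Suc j)) = 0" if "j < l" for j
    using assms sum_nonneg_eq_0_iff[of "{..<l}" "\<lambda>j. spoke_step (w j) (w (Suc j))"] that by blast
  then have layer: "fst (w j) = fst (w 0)" if "j \<le> l" for j
    using that
  proof (induction j)
    case (Suc j)
    then have "spoke_step (w j) (w (Suc j)) = 0" by simp
    then show ?case using Suc by (simp add: spoke_step_def split: if_splits)
  qed simp
  show ?thesis
  proof (cases "fst (w 0)")
    case True
    then have "outer_step n (w j) (w (Suc j)) = 0" if "j < l" for j
      using layer[of j] that by (simp add: outer_step_def)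
    then show ?thesis by simp
  next
    case False
    then have "inner_step n k (w j) (w (Suc j)) = 0" if "j < l" for j
      using layer[of j] that by (simp add: inner_step_def)
    then show ?thesis by simp
  qed
qed

lemma closed_walk_length:
  assumes "closed_walk (pet_edge n k) w l"
  shows "int l = (\<Sum>j<l. \<bar>outer_step n (w j) (w (Suc j))\<bar>) + (\<Sum>j<l. \<bar>inner_step n k (w j) (w (Suc j))\<bar>)
    + (\<Sum>j<l. spoke_step (w j) (w (Suc j)))"
proof -
  have "int l = (\<Sum>j<l. \<bar>outer_step n (w j) (w (Suc j))\<bar> + \<bar>inner_step n k (w j) (w (Suc j))\<bar>
      + spoke_step (w j) (w (Suc j)))"
    using assms pet_edge_step(2) by (simp add: closed_walk_def)
  then show ?thesis by (simp add: sum.distrib)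
qed

lemma closed_walk_lattice_point:
  assumes w: "closed_walk (pet_edge n k) w l" and "odd l"
  shows "\<exists>A B. odd_lattice_point n k A B \<and> cycle_cost A B \<le> int l"
proof -
  define a where "a j = outer_step n (w j) (w (Suc j))" for j
  define b where "b j = inner_step n k (w j) (w (Suc j))" for j
  define s where "s j = spoke_step (w j) (w (Suc j))" for j
  define A where "A = (\<Sum>j<l. a j)"
  define B where "B = (\<Sum>j<l. b j)"
  define S where "S = (\<Sum>j<l. s j)"
  define \<alpha> where "\<alpha> = (\<Sum>j<l. \<bar>a j\<bar>)"
  define \<beta> where "\<beta> = (\<Sum>j<l. \<bar>b j\<bar>)"
  have len: "int l = \<alpha> + \<beta> + S"
    using closed_walk_length[OF w] by (simp add: \<alpha>_def \<beta>_def S_def a_def b_def s_def)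
  have dv: "int n dvd A + int k * B"
    using closed_walk_displacement[OF w] by (simp add: A_def B_def a_def b_def)
  have S: "even S" "0 \<le> S"
    using even_spoke_steps w
    by (auto simp: closed_walk_def S_def s_def spoke_step_def intro: sum_nonneg)
  have "even (\<alpha> - A)" "even (\<beta> - B)"
    unfolding \<alpha>_def \<beta>_def A_def B_def sum_subtractf[symmetric]
    by (auto intro!: dvd_sum simp: abs_if)
  then have "even ((\<alpha> - A) + (\<beta> - B) + S)" using S(1) by simp
  moreover have "int l = (A + B) + ((\<alpha> - A) + (\<beta> - B) + S)"
    using len by simp
  ultimately have odd: "odd (A + B)"
    using \<open>odd l\<close> by (metis even_add even_of_nat)
  have "\<bar>A\<bar> \<le> \<alpha>" "\<bar>B\<bar> \<le> \<beta>"
    unfolding A_def B_def \<alpha>_def \<beta>_def by (rule sum_abs)+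
  moreover have "2 \<le> S" if "A \<noteq> 0" "B \<noteq> 0"
  proof -
    have "S \<noteq> 0"
      using no_spoke_steps_one_rim[of w l n k] that by (auto simp: A_def B_def a_def b_def S_def s_def)
    then show ?thesis using S by presburger
  qed
  moreover have "0 \<le> \<alpha>" "0 \<le> \<beta>"
    unfolding \<alpha>_def \<beta>_def by (simp_all add: sum_nonneg)
  ultimately have "cycle_cost A B \<le> int l"
    unfolding cycle_cost_def using len S(2) by (simp split: if_split) linarith
  then show ?thesis using dv odd by (auto simp: odd_lattice_point_def)
qed

section \<open>Integer arithmetic\<close>

lemma odd_abs_add_iff: "odd (\<bar>a\<bar> + b) \<longleftrightarrow> odd (a + (b::int))"
proof (cases "a < 0")
  case True
  then have "\<bar>a\<bar> + b = (a + b) + 2 * (- a)" by simp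
  then show ?thesis by auto
qed simp

text \<open>The floor and the ceiling of \<open>q / K\<close>, the latter written as \<open>- ((- q) div K)\<close>.\<close>

definition rounded_quotients :: "int \<Rightarrow> int \<Rightarrow> int set" where
  "rounded_quotients K q = {q div K, - ((- q) div K)}"

lemma rounded_quotients_cases:
  assumes "0 < K" "x \<in> rounded_quotients K q"
  obtains "x = q div K" "0 \<le> q - K * x" "q - K * x < K"
    | "x = q div K + 1" "0 < K * x - q" "K * x - q < K"
proof -
  define f where "f = q div K"
  define r where "r = q mod K"
  have qf: "q = K * f + r" and r: "0 \<le> r" "r < K"
    using assms(1) by (simp_all add: f_def r_def)
  have "- ((- q) div K) = (if r = 0 then f else f + 1)"
    using assms(1) by (simp add: zdiv_zminus1_eq_if f_def r_def)
  then consider "x = f" | "r \<noteq> 0" "x = f + 1"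
    using assms(2) unfolding rounded_quotients_def f_def by (auto split: if_splits)
  then show ?thesis
  proof cases
    case 1
    have "x = q div K" "q - K * x = r" using 1 by (simp add: f_def, simp add: qf)
    then show ?thesis using that(1) r by simp
  next
    case 2
    have "x = q div K + 1" "K * x - q = K - r"
      using 2 by (simp add: f_def, simp add: qf algebra_simps)
    then show ?thesis using that(2) r 2 by simp
  qed
qed

lemma rounded_quotients_shift:
  assumes "0 < K" "x \<in> rounded_quotients K q"
  shows "x - b \<in> rounded_quotients K (q - K * b)"
proof -
  have "q - K * b = q + K * (- b)" "- (q - K * b) = - q + K * b" by simp_all
  then have "(q - K * b) div K = q div K - b" "(- (q - K * b)) div K = (- q) div K + b"
    using assms(1) by (simp_all only: div_mult_self2)
  then show ?thesis using assms(2) by (auto simp: rounded_quotients_def)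
qed

lemma mult_floor_quotient_le: "0 < K \<Longrightarrow> K * (q div K) \<le> (q::int)"
  by (metis add.commute le_add_same_cancel2 mod_int_pos_iff mult_div_mod_eq)

lemma le_mult_ceiling_quotient: "0 < K \<Longrightarrow> (q::int) \<le> K * (- ((- q) div K))"
  using mult_floor_quotient_le[of K "- q"] by simp

lemma rounded_quotients_nonneg: "0 < K \<Longrightarrow> 0 \<le> q \<Longrightarrow> x \<in> rounded_quotients K q \<Longrightarrow> 0 \<le> x"
  by (auto elim: rounded_quotients_cases simp: pos_imp_zdiv_nonneg_iff)

lemma abs_sub_mult_below:
  fixes K q x y :: int
  assumes "0 \<le> K" "K * y \<le> q" "x \<le> y"
  shows "\<bar>q - K * x\<bar> + x = \<bar>q - K * y\<bar> + y + (K - 1) * (y - x)"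
proof -
  have "K * x \<le> K * y" using assms by (simp add: mult_left_mono)
  then show ?thesis using assms(2) by (simp add: algebra_simps)
qed

lemma abs_sub_mult_above:
  fixes K q x y :: int
  assumes "0 \<le> K" "q \<le> K * x" "x \<le> y"
  shows "\<bar>q - K * y\<bar> + y = \<bar>q - K * x\<bar> + x + (K + 1) * (y - x)"
proof -
  have "K * x \<le> K * y" using assms by (simp add: mult_left_mono)
  then show ?thesis using assms(2) by (simp add: algebra_simps)
qed

lemma multiplier_parity:
  fixes K A B q x :: int
  assumes "A + K * B = q" "odd (A + B)"
  shows "odd (q - K * x + x) \<or> (even K \<and> odd (B - x))"
proof -
  have "q - K * x + x = (A + B) + (K - 1) * (B - x)" using assms(1) by (simp add: algebra_simps)
  then show ?thesis using assms(2) by auto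
qed

lemma multiplier_choice_below:
  fixes K A B q x :: int
  assumes K: "0 < K" and B: "0 < B" and q: "A + K * B = q" "odd (A + B)"
    and x: "K * x \<le> q" "B \<le> x"
  shows "(odd (q - K * x + x) \<and> \<bar>q - K * x\<bar> + x \<le> \<bar>A\<bar> + B) \<or> (even K \<and> K + 1 \<le> \<bar>A\<bar> + B)"
proof -
  have eq: "\<bar>A\<bar> + B = \<bar>q - K * x\<bar> + x + (K - 1) * (x - B)"
    using abs_sub_mult_below[of K x q B] K x q(1) by auto
  show ?thesis
  proof (cases "odd (q - K * x + x)")
    case True
    have "0 \<le> (K - 1) * (x - B)" using K x by simp
    then show ?thesis using True eq by simp
  next
    case False
    with multiplier_parity[OF q] have "even K" "odd (B - x)" by auto
    then have "B + 1 \<le> x" using x by (cases "B = x") auto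
    then have "K - 1 \<le> (K - 1) * (x - B)" using K mult_left_mono[of 1 "x - B" "K - 1"] by simp
    then have "K + 1 \<le> \<bar>A\<bar> + B" using eq B \<open>B + 1 \<le> x\<close> abs_ge_zero[of "q - K * x"] by linarith
    then show ?thesis using \<open>even K\<close> by simp
  qed
qed

lemma multiplier_choice_above:
  fixes K A B q x :: int
  assumes K: "0 < K" and q: "A + K * B = q" "odd (A + B)"
    and x: "q \<le> K * x" "0 \<le> x" "x \<le> B"
  shows "(odd (q - K * x + x) \<and> \<bar>q - K * x\<bar> + x \<le> \<bar>A\<bar> + B) \<or> (even K \<and> K + 1 \<le> \<bar>A\<bar> + B)"
proof -
  have eq: "\<bar>A\<bar> + B = \<bar>q - K * x\<bar> + x + (K + 1) * (B - x)"
    using abs_sub_mult_above[of K q x B] K x q(1) by auto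
  show ?thesis
  proof (cases "odd (q - K * x + x)")
    case True
    have "0 \<le> (K + 1) * (B - x)" using K x by simp
    then show ?thesis using True eq by simp
  next
    case False
    with multiplier_parity[OF q] have "even K" "odd (B - x)" by auto
    then have "x + 1 \<le> B" using x by (cases "B = x") auto
    then have "K + 1 \<le> (K + 1) * (B - x)" using K mult_left_mono[of 1 "B - x" "K + 1"] by simp
    then have "K + 1 \<le> \<bar>A\<bar> + B" using eq x(2) abs_ge_zero[of "q - K * x"] by linarith
    then show ?thesis using \<open>even K\<close> by simp
  qed
qed

text \<open>Replacing the multiplier \<open>B\<close> of a representation \<open>A + K B = q\<close> by \<open>\<lfloor>q/K\<rfloor>\<close> or \<open>\<lceil>q/K\<rceil>\<close>
  does not increase \<open>|A| + B\<close>; the parity of \<open>A + B\<close> can only be lost when \<open>K\<close> is even, and then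
  \<open>|A| + B\<close> is already large.\<close>

lemma rounded_quotient_choice:
  fixes K A B q :: int
  assumes K: "0 < K" and B: "0 < B" and "0 \<le> q" and q: "A + K * B = q" "odd (A + B)"
  shows "(\<exists>x\<in>rounded_quotients K q. odd (q - K * x + x) \<and> \<bar>q - K * x\<bar> + x \<le> \<bar>A\<bar> + B)
    \<or> (even K \<and> K + 1 \<le> \<bar>A\<bar> + B)"
proof -
  define f where "f = q div K"
  define c where "c = - ((- q) div K)"
  have R: "f \<in> rounded_quotients K q" "c \<in> rounded_quotients K q"
    by (simp_all add: rounded_quotients_def f_def c_def)
  have Kc: "q \<le> K * c" using le_mult_ceiling_quotient[OF K] by (simp add: c_def)
  show ?thesis
  proof (cases "B \<le> f")
    case True
    have Kf: "K * f \<le> q" using mult_floor_quotient_le[OF K] by (simp add: f_def)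
    show ?thesis using multiplier_choice_below[OF K B q Kf True] R(1) by blast
  next
    case False
    from K R(2) have "c \<le> f + 1" by (cases rule: rounded_quotients_cases) (simp_all add: f_def)
    moreover have "0 \<le> K * c" using Kc \<open>0 \<le> q\<close> by simp
    then have "0 \<le> c" using K by (simp add: zero_le_mult_iff)
    ultimately show ?thesis using multiplier_choice_above[OF K q Kc] False R(2) by fastforce
  qed
qed

lemma rounded_quotient_large:
  fixes K q x :: int
  assumes K: "0 < K" and x: "x \<in> rounded_quotients K q" and q: "(K - 1)^2 < q" "q \<noteq> K * x"
  shows "K \<le> \<bar>q - K * x\<bar> + x"
proof (rule ccontr)
  assume small: "\<not> K \<le> \<bar>q - K * x\<bar> + x"
  have sq: "(K - 1)^2 = K * K - 2 * K + 1" by (simp add: power2_eq_square algebra_simps)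
  from K x show False
  proof (cases rule: rounded_quotients_cases)
    case 1
    define r where "r = q - K * x"
    have "x \<le> K - 1 - r" "1 \<le> r" using small 1 q(2) by (simp_all add: r_def)
    then have "K * x \<le> K * (K - 1 - r)" "0 \<le> (K - 1) * (r - 1)" using K by simp_all
    moreover have "K * (K - 1 - r) = K * K - K - K * r" "(K - 1) * (r - 1) = K * r - K - r + 1"
      by (simp_all add: algebra_simps)
    ultimately show False using q(1) sq r_def by linarith
  next
    case 2
    have "x \<le> K - 2" using small 2 by simp
    then have "K * x \<le> K * (K - 2)" using K by simp
    moreover have "K * (K - 2) = K * K - 2 * K" by (simp add: algebra_simps)
    ultimately show False using q(1) sq 2 by linarith
  qed
qed

lemma le_div_of_mult_le:
  fixes K a b :: int
  assumes "0 < K" "K * a \<le> b"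
  shows "a \<le> b div K"
  using assms by (metis nonzero_mult_div_cancel_left order.strict_implies_not_eq zdiv_mono1)

lemma quotient_gap:
  fixes K N t :: int
  assumes K: "0 < K" and N: "2 * K \<le> N" and t: "3 \<le> t" and sq: "(K - 1)^2 < (t - 1) * N"
  shows "2 * (N div K) + K + 2 \<le> 2 * ((t * N) div K)"
proof -
  define g where "g = ((t - 1) * N) div K"
  have "0 \<le> (N mod K + ((t - 1) * N) mod K) div K"
    using K by (simp add: pos_imp_zdiv_nonneg_iff)
  then have "N div K + g \<le> (N + (t - 1) * N) div K"
    unfolding g_def div_add1_eq[of N] by linarith
  also have "N + (t - 1) * N = t * N" by (simp add: algebra_simps)
  finally have "N div K + g \<le> (t * N) div K" .
  moreover have "K * (K - 2) = (K - 1)^2 - 1" by (simp add: power2_eq_square algebra_simps)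
  then have "K - 2 \<le> g"
    unfolding g_def using K sq by (intro le_div_of_mult_le) simp_all
  moreover have "2 * N \<le> (t - 1) * N"
    using t N K by (intro mult_right_mono) simp_all
  then have "K * 4 \<le> (t - 1) * N"
    using N by linarith
  then have "4 \<le> g"
    unfolding g_def using K by (intro le_div_of_mult_le) simp_all
  ultimately show ?thesis by linarith
qed

lemma G_set_eq:
  assumes "0 < k"
  shows "G_set n k = (\<Union>t\<in>Ind n k.
    (\<lambda>x. \<bar>t * int n - int k * x\<bar> + x + 2) ` rounded_quotients (int k) (t * int n))"
proof -
  have fl: "\<lfloor>real_of_int q / real k\<rfloor> = q div int k" for q
    using floor_divide_of_int_eq[of q "int k", where 'a=real] by simp
  have ce: "\<lceil>real_of_int q / real k\<rceil> = - ((- q) div int k)" for q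
    using fl[of "- q"] by (simp add: ceiling_def)
  have "q + (1 - int k) * (q div int k) + 2 = \<bar>q - int k * (q div int k)\<bar> + q div int k + 2" for q
    using mult_floor_quotient_le[of "int k" q] assms by (simp add: algebra_simps)
  moreover have "(1 + int k) * (- ((- q) div int k)) - q + 2 =
      \<bar>q - int k * (- ((- q) div int k))\<bar> + (- ((- q) div int k)) + 2" for q
    using le_mult_ceiling_quotient[of "int k" q] assms by (simp add: algebra_simps)
  ultimately show ?thesis
    unfolding G_set_def fl ce by (simp add: rounded_quotients_def)
qed

section \<open>The candidate values\<close>

locale petersen_params =
  fixes n k :: nat
  assumes k_gt_1: "2 < 2 * k" and two_k_le_n: "2 * k \<le> n"
    and non_bipartite: "\<not> (even n \<and> odd k)"
begin

definition n' :: nat where "n' = n div gcd n k"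
definition k' :: nat where "k' = k div gcd n k"

definition candidates :: "int set" where
  "candidates = {int n', int k + 3} \<union> G_set n k"

definition candidate_le :: "int \<Rightarrow> bool" where
  "candidate_le X \<longleftrightarrow> (\<exists>m\<in>candidates. odd m \<and> m \<le> X)"

definition sq_bound :: int where "sq_bound = (int k - 1)^2 div int n"

text \<open>The least solution of \<open>k b = n t\<close> with \<open>b\<close> even: shifting a representation
  \<open>A + k B = t n\<close> by it changes neither \<open>A\<close> nor the parity of \<open>A + B\<close>.\<close>

definition t_period :: int where "t_period = int (if even n' then k' else 2 * k')"
definition b_period :: int where "b_period = int (if even n' then n' else 2 * n')"

lemma k_ge_2: "2 \<le> k" and n_pos: "0 < n"
  using k_gt_1 two_k_le_n by simp_all

lemma n'_k'_props: "n = gcd n k * n'" "k = gcd n k * k'" "0 < k'" "coprime n' k'"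
proof -
  show n: "n = gcd n k * n'" and k: "k = gcd n k * k'" by (simp_all add: n'_def k'_def)
  show "0 < k'" using k k_ge_2 by (cases "k' = 0") auto
  show "coprime n' k'" unfolding n'_def k'_def using k_ge_2 by (intro div_gcd_coprime) auto
qed

lemma odd_n_of_odd_k: "odd k \<Longrightarrow> odd n"
  using non_bipartite by auto

lemma odd_n'_of_odd_n: "odd n \<Longrightarrow> odd n'"
  using n'_k'_props(1) by (metis even_mult_iff)

lemma n'_le_n: "n' \<le> n"
  by (simp add: n'_def)

lemma period_props: "int k * b_period = int n * t_period" "even b_period" "0 \<le> b_period" "1 \<le> t_period"
proof -
  have "k * n' = n * k'" using n'_k'_props(1,2) by (metis mult.assoc mult.commute)
  then show "int k * b_period = int n * t_period"
    unfolding t_period_def b_period_def by (simp flip: of_nat_mult)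
  show "even b_period" "0 \<le> b_period" "1 \<le> t_period"
    using n'_k'_props(3) by (simp_all add: t_period_def b_period_def)
qed

lemma sq_bound_props: "0 \<le> sq_bound" "(int k - 1)^2 < (sq_bound + 1) * int n"
proof -
  show "0 \<le> sq_bound" using n_pos by (simp add: sq_bound_def pos_imp_zdiv_nonneg_iff)
  have "(int k - 1)^2 = sq_bound * int n + (int k - 1)^2 mod int n" by (simp add: sq_bound_def)
  moreover have "(int k - 1)^2 mod int n < int n" using n_pos by simp
  ultimately show "(int k - 1)^2 < (sq_bound + 1) * int n" by (simp add: algebra_simps)
qed

lemma n'_dvd_of_n_dvd: "int n dvd int k * X \<Longrightarrow> int n' dvd X"
proof -
  assume "int n dvd int k * X"
  then have "int (gcd n k) * int n' dvd int (gcd n k) * (int k' * X)"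
    using n'_k'_props(1,2) by (metis mult.assoc of_nat_mult)
  then have "int n' dvd int k' * X" using n_pos by simp
  then show ?thesis using n'_k'_props(4) by (simp add: coprime_dvd_mult_right_iff)
qed

lemma Ind_memI:
  assumes "1 \<le> t" "t \<le> t_period" "if odd k then odd t \<and> t \<le> sq_bound + 1 else t \<le> sq_bound"
  shows "t \<in> Ind n k"
proof -
  have "2 * k div gcd n k = 2 * k'" by (simp add: k'_def div_mult_swap)
  moreover have "odd n'" if "odd k" using that odd_n_of_odd_k odd_n'_of_odd_n by simp
  ultimately show ?thesis
    using assms odd_n_of_odd_k
    by (auto simp: Ind_def Let_def t_period_def sq_bound_def n'_def[symmetric] k'_def[symmetric])
qed

lemma Ind_bounds: "t \<in> Ind n k \<Longrightarrow> 0 \<le> t \<and> t \<le> int (2 * k)"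
proof -
  have "int (2 * k div gcd n k) \<le> int (2 * k)" "int (k div gcd n k) \<le> int (2 * k)"
    using div_le_dividend[of k "gcd n k"] div_le_dividend[of "2 * k" "gcd n k"] by linarith+
  then show "t \<in> Ind n k \<Longrightarrow> 0 \<le> t \<and> t \<le> int (2 * k)"
    unfolding Ind_def Let_def by (auto split: if_splits)
qed

lemma finite_candidates: "finite candidates"
proof -
  have "finite (Ind n k)"
    by (rule finite_subset[of _ "{0..int (2 * k)}"]) (auto dest: Ind_bounds)
  then show ?thesis
    using k_ge_2 by (simp add: candidates_def G_set_eq rounded_quotients_def)
qed

lemma candidate_le_mono: "candidate_le X \<Longrightarrow> X \<le> Y \<Longrightarrow> candidate_le Y"
  unfolding candidate_le_def by force

lemma candidate_le_n'_dvd: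
  assumes "int n' dvd X" "odd X"
  shows "candidate_le \<bar>X\<bar>"
proof -
  have "odd (int n')" using assms dvd_trans by blast
  moreover have "X \<noteq> 0" using assms(2) by auto
  then have "int n' \<le> \<bar>X\<bar>"
    using assms(1) by (intro zdvd_imp_le) simp_all
  ultimately show ?thesis by (auto simp: candidate_le_def candidates_def)
qed

lemma candidate_le_k_plus_3: "even k \<Longrightarrow> int k + 3 \<le> X \<Longrightarrow> candidate_le X"
  by (auto simp: candidate_le_def candidates_def)

lemma candidate_le_G:
  assumes "t \<in> Ind n k" "x \<in> rounded_quotients (int k) (t * int n)"
    and "odd (t * int n - int k * x + x)"
  shows "candidate_le (\<bar>t * int n - int k * x\<bar> + x + 2)"
proof -
  have "\<bar>t * int n - int k * x\<bar> + x + 2 \<in> candidates"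
    using assms(1,2) k_ge_2 by (auto simp: candidates_def G_set_eq)
  moreover have "odd (\<bar>t * int n - int k * x\<bar> + x + 2)"
    using assms(3) odd_abs_add_iff[of "t * int n - int k * x" x] by simp
  ultimately show ?thesis unfolding candidate_le_def by (meson order_refl)
qed

lemma odd_candidate_near_quotient:
  assumes "odd k"
  shows "\<exists>m\<in>candidates. odd m \<and> 2 * m \<le> 2 * (int n div int k) + int k + 5"
proof -
  define f where "f = int n div int k"
  define r where "r = int n mod int k"
  have K: "0 < int k" using k_ge_2 by simp
  have nf: "int n - int k * f = r" and r: "0 \<le> r" "r < int k"
    using K by (simp_all add: f_def r_def minus_mult_div_eq_mod)
  have I: "1 \<in> Ind n k"
    using Ind_memI[of 1] period_props sq_bound_props assms by simp
  have "odd (int n)" using odd_n_of_odd_k assms by simp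
  then have parity: "odd (1 * int n - int k * x + x)" for x
    using assms by simp
  have "\<exists>x\<in>rounded_quotients (int k) (1 * int n). 2 * (\<bar>1 * int n - int k * x\<bar> + x + 2) \<le> 2 * f + int k + 5"
  proof (cases "2 * r \<le> int k + 1")
    case True
    have "f \<in> rounded_quotients (int k) (1 * int n)" by (simp add: rounded_quotients_def f_def)
    then show ?thesis using True nf r by (intro bexI[of _ f]) simp_all
  next
    case False
    then have "r \<noteq> 0" using K by auto
    then have "f + 1 \<in> rounded_quotients (int k) (1 * int n)"
      using K by (simp add: rounded_quotients_def zdiv_zminus1_eq_if f_def r_def)
    moreover have "int n - int k * (f + 1) = r - int k" using nf by (simp add: algebra_simps)
    ultimately show ?thesis using False r by (intro bexI[of _ "f + 1"]) simp_all
  qed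
  then obtain x where x: "x \<in> rounded_quotients (int k) (1 * int n)"
    and bound: "2 * (\<bar>1 * int n - int k * x\<bar> + x + 2) \<le> 2 * f + int k + 5" by blast
  from candidate_le_G[OF I x parity] obtain m where "m \<in> candidates" "odd m"
      "m \<le> \<bar>1 * int n - int k * x\<bar> + x + 2"
    by (auto simp: candidate_le_def)
  then show ?thesis using bound by (intro bexI[of _ m]) (simp_all add: f_def)
qed

lemma candidate_le_even_k_large_t:
  assumes "even k" "sq_bound < t" and x: "x \<in> rounded_quotients (int k) (t * int n)"
    and "t * int n \<noteq> int k * x" "odd (t * int n - int k * x + x)"
  shows "candidate_le (\<bar>t * int n - int k * x\<bar> + x + 2)"
proof -
  have "(sq_bound + 1) * int n \<le> t * int n"
    using assms(2) n_pos by (intro mult_right_mono) simp_all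
  then have "(int k - 1)^2 < t * int n" using sq_bound_props(2) by linarith
  then have "int k \<le> \<bar>t * int n - int k * x\<bar> + x"
    using rounded_quotient_large[OF _ x] assms(4) k_ge_2 by simp
  moreover have "odd (\<bar>t * int n - int k * x\<bar> + x)"
    using assms(5) odd_abs_add_iff by simp
  ultimately have "int k + 1 \<le> \<bar>t * int n - int k * x\<bar> + x"
    using \<open>even k\<close> by (cases "int k = \<bar>t * int n - int k * x\<bar> + x") auto
  then show ?thesis using candidate_le_k_plus_3[OF \<open>even k\<close>] by simp
qed

lemma candidate_le_odd_k_large_t:
  assumes "odd k" "odd t" "sq_bound + 1 < t" and x: "x \<in> rounded_quotients (int k) (t * int n)"
  shows "candidate_le (\<bar>t * int n - int k * x\<bar> + x + 2)"
proof -
  have K: "0 < int k" using k_ge_2 by simp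
  have "2 \<le> t" using assms(3) sq_bound_props(1) by linarith
  then have "3 \<le> t" using \<open>odd t\<close> by (cases "t = 2") auto
  have "(sq_bound + 1) * int n \<le> (t - 1) * int n"
    using assms(3) n_pos by (intro mult_right_mono) simp_all
  then have "(int k - 1)^2 < (t - 1) * int n" using sq_bound_props(2) by linarith
  moreover have "2 * int k \<le> int n" using two_k_le_n by linarith
  ultimately have gap: "2 * (int n div int k) + int k + 2 \<le> 2 * ((t * int n) div int k)"
    using quotient_gap[OF K _ \<open>3 \<le> t\<close>] by blast
  obtain m where m: "m \<in> candidates" "odd m" "2 * m \<le> 2 * (int n div int k) + int k + 5"
    using odd_candidate_near_quotient[OF \<open>odd k\<close>] by blast
  from K x have "(t * int n) div int k \<le> x"
    by (cases rule: rounded_quotients_cases) simp_all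
  then have "m \<le> \<bar>t * int n - int k * x\<bar> + x + 2" using m(3) gap by linarith
  then show ?thesis using m by (auto simp: candidate_le_def)
qed

lemma candidate_le_rounded_base:
  assumes t: "1 \<le> t" "t \<le> t_period" and x: "x \<in> rounded_quotients (int k) (t * int n)"
    and odd: "odd (t * int n - int k * x + x)"
  shows "candidate_le (\<bar>t * int n - int k * x\<bar> + x + 2)"
proof (cases "t * int n = int k * x")
  case True
  have "0 \<le> x" using rounded_quotients_nonneg[OF _ _ x] k_ge_2 t by simp
  have "int n' dvd x" using True n'_dvd_of_n_dvd[of x] by (metis dvd_triv_right)
  moreover have "odd x" using True odd by simp
  ultimately have "candidate_le \<bar>x\<bar>" by (rule candidate_le_n'_dvd)
  then show ?thesis by (rule candidate_le_mono) (use \<open>0 \<le> x\<close> in simp)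
next
  case As: False
  show ?thesis
  proof (cases "t \<in> Ind n k")
    case True
    then show ?thesis using candidate_le_G x odd by blast
  next
    case notInd: False
    show ?thesis
    proof (cases "odd k")
      case True
      have "t * int n = (t * int n - int k * x + x) + (int k - 1) * x" by (simp add: algebra_simps)
      moreover have "even ((int k - 1) * x)" using True by simp
      ultimately have "odd (t * int n)" using odd by (metis even_add)
      then have "odd t" by simp
      then have "sq_bound + 1 < t"
        using Ind_memI[OF t] notInd True by (cases "t \<le> sq_bound + 1") auto
      then show ?thesis using candidate_le_odd_k_large_t True \<open>odd t\<close> x by blast
    next
      case False
      then have "sq_bound < t"
        using Ind_memI[OF t] notInd by (cases "t \<le> sq_bound") auto
      then show ?thesis using candidate_le_even_k_large_t False x As odd by blast
    qed
  qed
qed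

lemma candidate_le_rounded:
  assumes "1 \<le> t" "x \<in> rounded_quotients (int k) (t * int n)" "odd (t * int n - int k * x + x)"
  shows "candidate_le (\<bar>t * int n - int k * x\<bar> + x + 2)"
  using assms
proof (induction "nat t" arbitrary: t x rule: less_induct)
  case less
  show ?case
  proof (cases "t \<le> t_period")
    case True
    then show ?thesis using candidate_le_rounded_base less.prems by blast
  next
    case False
    define t' where "t' = t - t_period"
    define x' where "x' = x - b_period"
    have shift: "t' * int n = t * int n - int k * b_period"
      using period_props(1) by (simp add: t'_def algebra_simps)
    have "x' \<in> rounded_quotients (int k) (t' * int n)"
      unfolding shift x'_def using k_ge_2 less.prems(2) by (intro rounded_quotients_shift) simp_all
    moreover have "t' * int n - int k * x' = t * int n - int k * x"
      using shift by (simp add: x'_def algebra_simps)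
    moreover have "nat t' < nat t" "1 \<le> t'"
      using False period_props(4) by (simp_all add: t'_def)
    ultimately have "candidate_le (\<bar>t * int n - int k * x\<bar> + x' + 2)"
      using less.hyps[of t' x'] less.prems(3) period_props(2) by (simp add: x'_def)
    then show ?thesis by (rule candidate_le_mono) (use period_props(3) in \<open>simp add: x'_def\<close>)
  qed
qed

lemma candidate_le_pos_multiple:
  assumes t: "A + int k * B = t * int n" "1 \<le> t" and "0 < B" "odd (A + B)"
  shows "candidate_le (\<bar>A\<bar> + B + 2)"
proof -
  have "0 \<le> t * int n" using t(2) by simp
  from rounded_quotient_choice[OF _ \<open>0 < B\<close> this t(1) \<open>odd (A + B)\<close>] k_ge_2
  consider "even k" "int k + 1 \<le> \<bar>A\<bar> + B"
    | x where "x \<in> rounded_quotients (int k) (t * int n)" "odd (t * int n - int k * x + x)"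
        "\<bar>t * int n - int k * x\<bar> + x \<le> \<bar>A\<bar> + B"
    by auto
  then show ?thesis
  proof cases
    case 1
    then show ?thesis using candidate_le_k_plus_3 by simp
  next
    case (2 x)
    show ?thesis
      using candidate_le_mono[OF candidate_le_rounded[OF t(2) 2(1,2)]] 2(3) by simp
  qed
qed

lemma candidate_le_nonpos_multiple:
  assumes t: "A + int k * B = t * int n" "t \<le> 0" and "0 < B" "odd (A + B)"
  shows "candidate_le (\<bar>A\<bar> + B + 2)"
proof -
  have kB: "int k \<le> int k * B" using mult_left_mono[of 1 B "int k"] \<open>0 < B\<close> by simp
  have "t * int n \<le> 0" using t(2) by (simp add: mult_nonpos_nonneg)
  show ?thesis
  proof (cases "odd k")
    case False
    have "int k + 3 \<le> \<bar>A\<bar> + B + 2"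
      using t(1) kB \<open>t * int n \<le> 0\<close> \<open>0 < B\<close> by linarith
    then show ?thesis using candidate_le_k_plus_3 False by simp
  next
    case True
    have "A + B = t * int n - (int k - 1) * B" using t(1) by (simp add: algebra_simps)
    moreover have "even ((int k - 1) * B)" using True by simp
    ultimately have "odd t" using \<open>odd (A + B)\<close> by simp
    then have "t \<le> - 1" using t(2) by (cases "t = 0") auto
    then have "t * int n \<le> - 1 * int n" by (intro mult_right_mono) simp_all
    moreover have "int n' \<le> int n" using n'_le_n by simp
    ultimately have "int n' \<le> \<bar>A\<bar> + B + 2"
      using t(1) kB \<open>0 < B\<close> abs_ge_minus_self[of A] by linarith
    moreover have "int n' \<in> candidates" "odd (int n')"
      using True odd_n_of_odd_k odd_n'_of_odd_n by (simp_all add: candidates_def)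
    ultimately show ?thesis unfolding candidate_le_def by blast
  qed
qed

lemma candidate_le_cycle_cost_nonneg:
  assumes la: "odd_lattice_point n k A B" and "0 \<le> B"
  shows "candidate_le (cycle_cost A B)"
proof -
  have dv: "int n dvd A + int k * B" and odd: "odd (A + B)"
    using la by (simp_all add: odd_lattice_point_def)
  consider "B = 0" | "A = 0" "B \<noteq> 0" | "A \<noteq> 0" "0 < B" using \<open>0 \<le> B\<close> by linarith
  then show ?thesis
  proof cases
    case 1
    have "int n' dvd int n" using n'_k'_props(1) by (metis dvd_triv_right of_nat_dvd_iff)
    moreover have "int n dvd A" using dv 1 by simp
    ultimately have "int n' dvd A" by (rule dvd_trans)
    moreover have "cycle_cost A B = \<bar>A\<bar>" using 1 by (simp add: cycle_cost_def)
    ultimately show ?thesis using candidate_le_n'_dvd odd 1 by simp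
  next
    case 2
    then have "int n' dvd B" using dv n'_dvd_of_n_dvd by simp
    moreover have "cycle_cost A B = \<bar>B\<bar>" using 2 by (simp add: cycle_cost_def)
    ultimately show ?thesis using candidate_le_n'_dvd odd 2 by simp
  next
    case 3
    from dv obtain t where "A + int k * B = int n * t" by (rule dvdE)
    then have t: "A + int k * B = t * int n" by (simp add: mult.commute)
    have "cycle_cost A B = \<bar>A\<bar> + B + 2" using 3 by (simp add: cycle_cost_def)
    then show ?thesis
      using candidate_le_pos_multiple[OF t _ 3(2) odd] candidate_le_nonpos_multiple[OF t _ 3(2) odd]
      by (cases "1 \<le> t") simp_all
  qed
qed

lemma candidate_le_cycle_cost:
  assumes "odd_lattice_point n k A B"
  shows "candidate_le (cycle_cost A B)"
proof (cases "0 \<le> B")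
  case False
  have "int n dvd - (A + int k * B)" "odd (- (A + B))"
    using assms unfolding odd_lattice_point_def by (metis dvd_minus_iff, metis even_minus)
  then have "odd_lattice_point n k (- A) (- B)" "cycle_cost (- A) (- B) = cycle_cost A B"
    by (simp_all add: odd_lattice_point_def cycle_cost_def)
  then show ?thesis using candidate_le_cycle_cost_nonneg[of "- A" "- B"] False by simp
qed (use assms candidate_le_cycle_cost_nonneg in blast)

lemma lattice_point_of_candidate:
  assumes "m \<in> candidates" "odd m"
  shows "\<exists>A B. odd_lattice_point n k A B \<and> cycle_cost A B \<le> m"
proof -
  have "int k * int n' = int n * int k'"
    using n'_k'_props(1,2) by (metis mult.assoc mult.commute of_nat_mult)
  then have n': "odd_lattice_point n k 0 (int n')" if "m = int n'"
    using that assms(2) by (simp add: odd_lattice_point_def)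
  have k3: "odd_lattice_point n k (- int k) 1" if "m = int k + 3"
    using that assms(2) by (simp add: odd_lattice_point_def)
  consider "m = int n'" | "m = int k + 3" | "m \<in> G_set n k"
    using assms(1) by (auto simp: candidates_def)
  then show ?thesis
  proof cases
    case 1
    then show ?thesis using n' by (intro exI[of _ 0] exI[of _ "int n'"]) (simp add: cycle_cost_def)
  next
    case 2
    then show ?thesis using k3 by (intro exI[of _ "- int k"] exI[of _ 1]) (simp add: cycle_cost_def)
  next
    case 3
    then obtain t x where t: "t \<in> Ind n k" and x: "x \<in> rounded_quotients (int k) (t * int n)"
      and m: "m = \<bar>t * int n - int k * x\<bar> + x + 2"
      using k_ge_2 by (auto simp: G_set_eq)
    have "0 \<le> x" using rounded_quotients_nonneg[OF _ _ x] Ind_bounds[OF t] k_ge_2 by simp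
    moreover have "odd_lattice_point n k (t * int n - int k * x) x"
      using assms(2) m odd_abs_add_iff by (simp add: odd_lattice_point_def)
    moreover have "cycle_cost (t * int n - int k * x) x \<le> m"
      using m \<open>0 \<le> x\<close> by (simp add: cycle_cost_def)
    ultimately show ?thesis by blast
  qed
qed

lemma odd_cycle_of_candidate:
  assumes "m \<in> candidates" "odd m"
  shows "\<exists>vs. pet_cycle n k vs \<and> odd (length vs) \<and> int (length vs) \<le> m"
proof -
  obtain A B where "odd_lattice_point n k A B" "cycle_cost A B \<le> m"
    using lattice_point_of_candidate[OF assms] by blast
  moreover have "0 < k" "k < n" using k_ge_2 two_k_le_n by simp_all
  ultimately obtain vs where "is_cycle (pet_edge n k) vs" "odd (length vs)" "int (length vs) \<le> m"
    using lattice_point_odd_cycle[of k n] by fastforce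
  then show ?thesis by (auto simp: pet_cycle_iff)
qed

lemma candidate_le_odd_cycle:
  assumes "pet_cycle n k vs" "odd (length vs)"
  shows "candidate_le (int (length vs))"
proof -
  have "closed_walk (pet_edge n k) (\<lambda>j. vs ! (j mod length vs)) (length vs)"
    using assms(1) by (simp add: pet_cycle_iff closed_walk_of_cycle)
  from closed_walk_lattice_point[OF this assms(2)] obtain A B
    where "odd_lattice_point n k A B" "cycle_cost A B \<le> int (length vs)" by blast
  then show ?thesis using candidate_le_cycle_cost candidate_le_mono by blast
qed

lemma odd_candidates_nonempty: "candidates \<inter> {m. odd m} \<noteq> {}"
proof (cases "odd k")
  case True
  then have "odd (int n')" using odd_n_of_odd_k odd_n'_of_odd_n by simp
  then show ?thesis by (auto simp: candidates_def)
qed (auto simp: candidates_def)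

lemma pet_odd_girth_eq_Min: "int (pet_odd_girth n k) = Min (candidates \<inter> {m. odd m})"
proof -
  define C where "C = candidates \<inter> {m. odd m}"
  have "finite C" "C \<noteq> {}"
    using finite_candidates odd_candidates_nonempty by (simp_all add: C_def)
  then have "Min C \<in> candidates" "odd (Min C)" and min_le: "\<And>m. m \<in> C \<Longrightarrow> Min C \<le> m"
    using Min_in[of C] by (auto simp: C_def)
  then obtain vs where vs: "pet_cycle n k vs" "odd (length vs)" "int (length vs) \<le> Min C"
    using odd_cycle_of_candidate by blast
  have "pet_odd_girth n k = nat (Min C)"
  proof (rule pet_odd_girth_eqI[OF vs(1,2)])
    show "length vs \<le> nat (Min C)" using vs(3) by linarith
    show "nat (Min C) \<le> length ws" if ws: "pet_cycle n k ws" "odd (length ws)" for ws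
    proof -
      obtain m where "m \<in> C" "m \<le> int (length ws)"
        using candidate_le_odd_cycle[OF ws] by (auto simp: candidate_le_def C_def)
      then show ?thesis using min_le[of m] by linarith
    qed
  qed
  then show ?thesis using vs(3) by (simp add: C_def)
qed

end

theorem theorem1:
  fixes n k :: nat
  assumes "2 < 2 * k" and "2 * k \<le> n"
    and "\<not> (even n \<and> odd k)"
  shows "int (pet_odd_girth n k) =
    Min (({int (n div gcd n k), int k + 3} \<union> G_set n k) \<inter> {m. odd m})"
proof -
  interpret petersen_params n k using assms by unfold_locales
  have "{int (n div gcd n k), int k + 3} \<union> G_set n k = candidates"
    by (simp add: candidates_def n'_def)
  then show ?thesis using pet_odd_girth_eq_Min by simp
qed

end
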